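(* Let $\wp\colon\tilde X\to X$ be a $2$-cover of connected graphs, let $G\leq\mathrm{Aut}\,X$ be vertex-transitive, and suppose $\wp$ is $G$-split with a sectional complement. Then $\mathrm{CT}(\wp)$ has a complement within the lifted group $\tilde G$ which is transitive on $V(\tilde X)$ if and only if $G$ has a vertex-transitive subgroup of index $2$.
   Context: Graphs are finite and simple; maps are composed on the right. A regular covering projection $\wp\colon\tilde X\to X$ is a surjective graph homomorphism that is a local bijection on neighbourhoods and such that the group $\mathrm{CT}(\wp)$ of covering transformations (automorphisms $c$ of $\tilde X$ with $c\wp=\wp$) acts regularly on each fibre; it is a $2$-cover if $\mathrm{CT}(\wp)\cong\mathbb{Z}_2$. A lift of $g\in\mathrm{Aut}\,X$ is $\tilde g\in\mathrm{Aut}\,\tilde X$ with $\wp g=\tilde g\wp$; $G$ lifts if each element has a lift, and the lifted group $\tilde G$ consists of all lifts of elements of $G$ (so $\tilde G/\mathrm{CT}(\wp)\cong G$). $\wp$ is $G$-split if $G$ lifts and $\mathrm{CT}(\wp)$ has a complement in $\tilde G$. A section is a set of vertices of $\tilde X$ meeting each fibre in exactly one vertex; a complement is sectional if it leaves some section invariant. *)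

theory Defs
  imports "HOL-Algebra.Coset"
begin

record 'a graph =
  verts :: "'a set"
  adj :: "'a \<Rightarrow> 'a \<Rightarrow> bool"

definition simple_graph :: "'a graph \<Rightarrow> bool" where
  "simple_graph X \<longleftrightarrow> finite (verts X)
     \<and> (\<forall>u v. adj X u v \<longrightarrow> u \<in> verts X \<and> v \<in> verts X)
     \<and> (\<forall>u v. adj X u v \<longrightarrow> adj X v u)
     \<and> (\<forall>u. \<not> adj X u u)"

definition connected_graph :: "'a graph \<Rightarrow> bool" where
  "connected_graph X \<longleftrightarrow> verts X \<noteq> {} \<and>
     (\<forall>u\<in>verts X. \<forall>v\<in>verts X. (adj X)\<^sup>*\<^sup>* u v)"

definition auts :: "'a graph \<Rightarrow> ('a \<Rightarrow> 'a) set" where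
  "auts X = {f. bij_betw f (verts X) (verts X)
                \<and> (\<forall>u\<in>verts X. \<forall>v\<in>verts X. adj X (f u) (f v) \<longleftrightarrow> adj X u v)
                \<and> (\<forall>x. x \<notin> verts X \<longrightarrow> f x = x)}"

definition aut_group :: "'a graph \<Rightarrow> ('a \<Rightarrow> 'a) monoid" where
  "aut_group X = \<lparr>carrier = auts X, mult = (\<lambda>f g. f \<circ> g), one = id\<rparr>"

definition vertex_transitive :: "'a graph \<Rightarrow> ('a \<Rightarrow> 'a) set \<Rightarrow> bool" where
  "vertex_transitive X G \<longleftrightarrow> (\<forall>u\<in>verts X. \<forall>v\<in>verts X. \<exists>g\<in>G. g u = v)"

definition CT :: "'b graph \<Rightarrow> 'a graph \<Rightarrow> ('b \<Rightarrow> 'a) \<Rightarrow> ('b \<Rightarrow> 'b) set" where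
  "CT Xt X p = {c \<in> auts Xt. \<forall>x\<in>verts Xt. p (c x) = p x}"

definition regular_covering :: "'b graph \<Rightarrow> 'a graph \<Rightarrow> ('b \<Rightarrow> 'a) \<Rightarrow> bool" where
  "regular_covering Xt X p \<longleftrightarrow>
     p ` verts Xt = verts X
     \<and> (\<forall>u v. adj Xt u v \<longrightarrow> adj X (p u) (p v))
     \<and> (\<forall>v\<in>verts Xt. bij_betw p {w. adj Xt v w} {w. adj X (p v) w})
     \<and> (\<forall>x\<in>verts Xt. \<forall>y\<in>verts Xt. p y = p x \<longrightarrow> (\<exists>!c. c \<in> CT Xt X p \<and> c x = y))"

definition two_cover :: "'b graph \<Rightarrow> 'a graph \<Rightarrow> ('b \<Rightarrow> 'a) \<Rightarrow> bool" where
  "two_cover Xt X p \<longleftrightarrow> regular_covering Xt X p \<and> card (CT Xt X p) = 2"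

text \<open>gt is a lift of g: (x)p g = (x) gt p for all vertices x (maps composed on the right).\<close>

definition is_lift :: "'b graph \<Rightarrow> ('b \<Rightarrow> 'a) \<Rightarrow> ('a \<Rightarrow> 'a) \<Rightarrow> ('b \<Rightarrow> 'b) \<Rightarrow> bool" where
  "is_lift Xt p g gt \<longleftrightarrow> gt \<in> auts Xt \<and> (\<forall>x\<in>verts Xt. g (p x) = p (gt x))"

definition lifts :: "'b graph \<Rightarrow> ('b \<Rightarrow> 'a) \<Rightarrow> ('a \<Rightarrow> 'a) set \<Rightarrow> bool" where
  "lifts Xt p G \<longleftrightarrow> (\<forall>g\<in>G. \<exists>gt. is_lift Xt p g gt)"

definition lifted_group :: "'b graph \<Rightarrow> ('b \<Rightarrow> 'a) \<Rightarrow> ('a \<Rightarrow> 'a) set \<Rightarrow> ('b \<Rightarrow> 'b) set" where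
  "lifted_group Xt p G = {gt. \<exists>g\<in>G. is_lift Xt p g gt}"

definition CT_complement :: "'b graph \<Rightarrow> 'a graph \<Rightarrow> ('b \<Rightarrow> 'a) \<Rightarrow> ('a \<Rightarrow> 'a) set
    \<Rightarrow> ('b \<Rightarrow> 'b) set \<Rightarrow> bool" where
  "CT_complement Xt X p G K \<longleftrightarrow>
     subgroup K (aut_group Xt) \<and> K \<subseteq> lifted_group Xt p G
     \<and> K \<inter> CT Xt X p = {id}
     \<and> K <#>\<^bsub>aut_group Xt\<^esub> CT Xt X p = lifted_group Xt p G"

definition G_split :: "'b graph \<Rightarrow> 'a graph \<Rightarrow> ('b \<Rightarrow> 'a) \<Rightarrow> ('a \<Rightarrow> 'a) set \<Rightarrow> bool" where
  "G_split Xt X p G \<longleftrightarrow> lifts Xt p G \<and> (\<exists>K. CT_complement Xt X p G K)"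

definition is_section :: "'b graph \<Rightarrow> 'a graph \<Rightarrow> ('b \<Rightarrow> 'a) \<Rightarrow> 'b set \<Rightarrow> bool" where
  "is_section Xt X p S \<longleftrightarrow> S \<subseteq> verts Xt \<and> (\<forall>v\<in>verts X. \<exists>!s. s \<in> S \<and> p s = v)"

definition sectional :: "'b graph \<Rightarrow> 'a graph \<Rightarrow> ('b \<Rightarrow> 'a) \<Rightarrow> ('b \<Rightarrow> 'b) set \<Rightarrow> bool" where
  "sectional Xt X p K \<longleftrightarrow> (\<exists>S. is_section Xt X p S \<and> (\<forall>k\<in>K. k ` S = S))"

end

(* If K0 is a complement of CT = {1, tau} in the lifted group and H is the kernel of a
   homomorphism from G to Z2, composing the K0-lift of every g outside H with tau gives
   another complement, because tau is central of order two; conversely, every complement K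
   arises from K0 in this way, with H the set of g whose lifts in K and in K0 agree.
   If K0 leaves a section S invariant, its elements preserve both S and tau S, so in the
   twisted complement the lifts of elements of H preserve S while the others swap S and tau S.
   Such a complement is therefore vertex-transitive exactly when H is proper (some element
   must carry S to tau S) and transitive on V(X) (the lifts preserving S act on S as H acts
   on V(X)). Finally, the proper kernels of homomorphisms to Z2 are the subgroups of index 2. *)

theory Submission
  imports Defs
begin

(* H is the kernel of a homomorphism from J to a group of order two that maps J - H to the
   non-identity element. *)
definition parity_kernel :: "('g, 'm) monoid_scheme \<Rightarrow> 'g set \<Rightarrow> 'g set \<Rightarrow> bool" where
  "parity_kernel M J H \<longleftrightarrow> H \<subseteq> J \<and> (\<forall>a\<in>J. \<forall>b\<in>J. a \<otimes>\<^bsub>M\<^esub> b \<in> H \<longleftrightarrow> (a \<in> H \<longleftrightarrow> b \<in> H))"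

lemma (in group) subgroup_mult_mem_iff:
  assumes "subgroup H G" and "a \<in> H" and "b \<in> carrier G"
  shows "a \<otimes> b \<in> H \<longleftrightarrow> b \<in> H" and "b \<otimes> a \<in> H \<longleftrightarrow> b \<in> H"
proof -
  interpret H: subgroup H G by fact
  have a: "a \<in> carrier G" "inv a \<in> H" using assms(2) by simp_all
  have "inv a \<otimes> (a \<otimes> b) = b" and "(b \<otimes> a) \<otimes> inv a = b"
    using a assms(3) by (simp_all add: m_assoc[symmetric] m_assoc)
  then show "a \<otimes> b \<in> H \<longleftrightarrow> b \<in> H" and "b \<otimes> a \<in> H \<longleftrightarrow> b \<in> H"
    using assms(2) a(2) H.m_closed by metis+
qed

lemma (in group) parity_kernel_subgroup:
  assumes J: "subgroup J G" and H: "parity_kernel G J H"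
  shows "subgroup H G"
proof (rule subgroupI)
  interpret J: subgroup J G by (fact J)
  have HJ: "H \<subseteq> J" and parity: "\<And>a b. a \<in> J \<Longrightarrow> b \<in> J \<Longrightarrow> a \<otimes> b \<in> H \<longleftrightarrow> (a \<in> H \<longleftrightarrow> b \<in> H)"
    using H unfolding parity_kernel_def by auto
  show "H \<subseteq> carrier G" using HJ J.subset by blast
  have one: "\<one> \<in> H" using parity[of \<one> \<one>] by simp
  then show "H \<noteq> {}" by blast
  show "inv a \<in> H" if "a \<in> H" for a
    using parity[of a "inv a"] that HJ one J.mem_carrier by auto
  show "a \<otimes> b \<in> H" if "a \<in> H" "b \<in> H" for a b
    using parity[of a b] that HJ by auto
qed

lemma (in group) left_translate_subgroup:
  assumes J: "subgroup J G" and H: "subgroup H G" and HJ: "H \<subseteq> J" and a: "a \<in> J - H"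
  shows "(\<otimes>) a ` H \<subseteq> J - H" and "card ((\<otimes>) a ` H) = card H"
proof -
  interpret J: subgroup J G by (fact J)
  show "(\<otimes>) a ` H \<subseteq> J - H"
    using a HJ subgroup_mult_mem_iff(2)[OF H] by auto
  show "card ((\<otimes>) a ` H) = card H"
    using a HJ by (intro card_image inj_on_subset[OF inj_on_cmult]) auto
qed

lemma (in group) parity_kernel_if_index_two:
  assumes J: "subgroup J G" and H: "subgroup H G" and HJ: "H \<subseteq> J" and fin: "finite J"
    and card: "card J = 2 * card H"
  shows "H \<noteq> J" and "parity_kernel G J H"
proof -
  interpret J: subgroup J G by (fact J)
  interpret H: subgroup H G by (fact H)
  have finH: "finite H" using fin HJ by (rule finite_subset[rotated])
  then have "card H > 0" using H.one_closed card_gt_0_iff by blast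
  then show "H \<noteq> J" using card by auto
  have "card (J - H) = card H"
    using card_Diff_subset[OF finH HJ] card by simp
  then have coset: "(\<otimes>) a ` H = J - H" if "a \<in> J - H" for a
    using card_subset_eq[OF _ left_translate_subgroup(1)[OF J H HJ that]] fin
      left_translate_subgroup(2)[OF J H HJ that] by simp
  have "a \<otimes> b \<in> H \<longleftrightarrow> (a \<in> H \<longleftrightarrow> b \<in> H)" if ab: "a \<in> J" "b \<in> J" for a b
  proof (cases "a \<in> H \<or> b \<in> H")
    case True
    then show ?thesis using subgroup_mult_mem_iff[OF H] ab by auto
  next
    case False
    have "a \<otimes> b \<in> H"
    proof (rule ccontr)
      assume "a \<otimes> b \<notin> H"
      then have "a \<otimes> b \<in> (\<otimes>) a ` H" using coset[of a] False ab by blast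
      then obtain h where "h \<in> H" and "a \<otimes> b = a \<otimes> h" by blast
      then have "b \<in> H" using ab by simp
      with False show False by simp
    qed
    with False show ?thesis by simp
  qed
  with HJ show "parity_kernel G J H" unfolding parity_kernel_def by blast
qed

lemma (in group) index_two_if_parity_kernel:
  assumes J: "subgroup J G" and H: "subgroup H G" and fin: "finite J"
    and "H \<noteq> J" and parity_kernel: "parity_kernel G J H"
  shows "card J = 2 * card H"
proof -
  interpret J: subgroup J G by (fact J)
  interpret H: subgroup H G by (fact H)
  have HJ: "H \<subseteq> J"
    and parity: "\<And>a b. a \<in> J \<Longrightarrow> b \<in> J \<Longrightarrow> a \<otimes> b \<in> H \<longleftrightarrow> (a \<in> H \<longleftrightarrow> b \<in> H)"
    using parity_kernel unfolding parity_kernel_def by auto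
  obtain a where a: "a \<in> J - H" using HJ \<open>H \<noteq> J\<close> by blast
  have "J - H \<subseteq> (\<otimes>) a ` H"
  proof
    fix g assume g: "g \<in> J - H"
    have "inv a \<in> J - H"
      using a H.m_inv_closed[of "inv a"] by auto
    then have "inv a \<otimes> g \<in> H" using parity g by blast
    moreover have "g = a \<otimes> (inv a \<otimes> g)"
      using a g by (simp add: m_assoc[symmetric])
    ultimately show "g \<in> (\<otimes>) a ` H" by blast
  qed
  then have "(\<otimes>) a ` H = J - H" using left_translate_subgroup(1)[OF J H HJ a] by blast
  then have "card (J - H) = card H" using left_translate_subgroup(2)[OF J H HJ a] by simp
  moreover have "finite H" using fin HJ by (rule finite_subset[rotated])
  ultimately show ?thesis using card_Diff_subset[of H J] card_mono[OF fin HJ] HJ by simp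
qed

lemma aut_group_simps [simp]:
  "carrier (aut_group X) = auts X" "mult (aut_group X) f g = f \<circ> g" "one (aut_group X) = id"
  by (simp_all add: aut_group_def)

lemma auts_mem_verts: "f \<in> auts X \<Longrightarrow> x \<in> verts X \<Longrightarrow> f x \<in> verts X"
  unfolding auts_def by (auto simp: bij_betw_def)

lemma auts_outside: "f \<in> auts X \<Longrightarrow> x \<notin> verts X \<Longrightarrow> f x = x"
  unfolding auts_def by auto

lemma id_in_auts: "id \<in> auts X"
  unfolding auts_def by auto

lemma comp_in_auts:
  assumes f: "f \<in> auts X" and g: "g \<in> auts X"
  shows "f \<circ> g \<in> auts X"
proof -
  have "bij_betw (f \<circ> g) (verts X) (verts X)"
    using f g unfolding auts_def by (auto intro: bij_betw_trans)
  moreover have "adj X (f (g u)) (f (g v)) \<longleftrightarrow> adj X u v" if "u \<in> verts X" "v \<in> verts X" for u v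
    using f g that auts_mem_verts[OF g] unfolding auts_def by auto
  ultimately show ?thesis
    using f g unfolding auts_def by auto
qed

lemma auts_inverse:
  assumes f: "f \<in> auts X"
  shows "\<exists>g\<in>auts X. g \<circ> f = id"
proof -
  define g where "g y = (if y \<in> verts X then inv_into (verts X) f y else y)" for y
  have bij: "bij_betw f (verts X) (verts X)"
    using f unfolding auts_def by auto
  have "bij_betw (inv_into (verts X) f) (verts X) (verts X)"
    using bij by (rule bij_betw_inv_into)
  then have g_bij: "bij_betw g (verts X) (verts X)"
    by (rule bij_betw_cong[THEN iffD1, rotated]) (simp add: g_def)
  have f_g: "f (g y) = y" if "y \<in> verts X" for y
    using bij that by (simp add: g_def bij_betw_def f_inv_into_f)
  have g_f: "g \<circ> f = id"
  proof
    fix x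
    show "(g \<circ> f) x = id x"
      using bij auts_mem_verts[OF f] auts_outside[OF f]
      by (cases "x \<in> verts X") (auto simp: g_def bij_betw_def)
  qed
  have "adj X (g u) (g v) \<longleftrightarrow> adj X u v" if "u \<in> verts X" "v \<in> verts X" for u v
  proof -
    have "g u \<in> verts X" "g v \<in> verts X"
      using g_bij that by (auto simp: bij_betw_def)
    then have "adj X (f (g u)) (f (g v)) \<longleftrightarrow> adj X (g u) (g v)"
      using f unfolding auts_def by blast
    then show ?thesis
      using f_g that by simp
  qed
  then have "g \<in> auts X"
    using g_bij unfolding auts_def by (auto simp: g_def)
  with g_f show ?thesis by blast
qed

lemma group_aut_group: "group (aut_group X)"
  by (rule groupI) (auto simp: id_in_auts comp_in_auts auts_inverse)

lemma finite_auts: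
  assumes "finite (verts X)"
  shows "finite (auts X)"
proof (rule inj_on_finite)
  show "inj_on (\<lambda>f. restrict f (verts X)) (auts X)"
    by (rule inj_onI) (metis auts_outside restrict_apply' ext)
  show "(\<lambda>f. restrict f (verts X)) ` auts X \<subseteq> verts X \<rightarrow>\<^sub>E verts X"
    using auts_mem_verts by fastforce
  show "finite (verts X \<rightarrow>\<^sub>E verts X)"
    using assms by (simp add: finite_PiE)
qed

lemma is_lift_comp:
  assumes "is_lift Xt p g k" and "is_lift Xt p g' k'"
  shows "is_lift Xt p (g \<circ> g') (k \<circ> k')"
  using assms auts_mem_verts[of k' Xt] by (auto simp: is_lift_def comp_in_auts)

lemma is_lift_id_iff_CT: "is_lift Xt p id c \<longleftrightarrow> c \<in> CT Xt X p"
  by (auto simp: is_lift_def CT_def)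

locale two_covering =
  fixes Xt :: "'b graph" and X :: "'a graph" and p :: "'b \<Rightarrow> 'a"
  assumes two_cover: "two_cover Xt X p" and verts_nonempty: "verts Xt \<noteq> {}"
begin

lemma proj_image: "p ` verts Xt = verts X"
  using two_cover unfolding two_cover_def regular_covering_def by blast

lemma proj_verts: "x \<in> verts Xt \<Longrightarrow> p x \<in> verts X"
  using proj_image by blast

lemma CT_unique: "x \<in> verts Xt \<Longrightarrow> y \<in> verts Xt \<Longrightarrow> p y = p x \<Longrightarrow> \<exists>!c. c \<in> CT Xt X p \<and> c x = y"
  using two_cover unfolding two_cover_def regular_covering_def by blast

definition flip :: "'b \<Rightarrow> 'b" where
  "flip = (SOME c. c \<in> CT Xt X p \<and> c \<noteq> id)"

lemma id_in_CT: "id \<in> CT Xt X p"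
  using is_lift_id_iff_CT[of Xt p id X] by (simp add: is_lift_def id_in_auts)

lemma CT_eq: "CT Xt X p = {id, flip}" and flip_neq_id: "flip \<noteq> id"
proof -
  obtain a b where ab: "CT Xt X p = {a, b}" "a \<noteq> b"
    using two_cover unfolding two_cover_def by (auto simp: card_2_iff)
  then have "\<exists>c. c \<in> CT Xt X p \<and> c \<noteq> id" by blast
  then have "flip \<in> CT Xt X p \<and> flip \<noteq> id"
    unfolding flip_def by (rule someI_ex)
  with ab id_in_CT show "CT Xt X p = {id, flip}" "flip \<noteq> id" by auto
qed

lemma lift_id_flip: "is_lift Xt p id flip"
  using CT_eq is_lift_id_iff_CT by blast

lemma flip_aut: "flip \<in> auts Xt"
  using lift_id_flip by (simp add: is_lift_def)

lemma flip_proj: "x \<in> verts Xt \<Longrightarrow> p (flip x) = p x"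
  using lift_id_flip by (simp add: is_lift_def)

lemma flip_no_fixpoint:
  assumes x: "x \<in> verts Xt"
  shows "flip x \<noteq> x"
proof
  assume "flip x = x"
  have "(THE c. c \<in> CT Xt X p \<and> c x = x) = id"
    by (rule the1_equality[OF CT_unique[OF x x refl]]) (simp add: id_in_CT)
  moreover have "(THE c. c \<in> CT Xt X p \<and> c x = x) = flip"
    by (rule the1_equality[OF CT_unique[OF x x refl]]) (simp add: CT_eq \<open>flip x = x\<close>)
  ultimately show False using flip_neq_id by simp
qed

lemma flip_flip [simp]: "flip (flip x) = x"
proof -
  have "flip \<circ> flip \<in> CT Xt X p"
    using is_lift_comp[OF lift_id_flip lift_id_flip] is_lift_id_iff_CT by fastforce
  moreover have "flip \<circ> flip \<noteq> flip"
  proof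
    assume flip_idem: "flip \<circ> flip = flip"
    obtain x where "x \<in> verts Xt" using verts_nonempty by blast
    then have "flip (flip x) \<noteq> flip x"
      using flip_no_fixpoint auts_mem_verts[OF flip_aut] by simp
    with flip_idem show False by (simp add: fun_eq_iff)
  qed
  ultimately have "flip \<circ> flip = id" using CT_eq by blast
  then show ?thesis by (metis comp_apply id_apply)
qed

lemma flip_comp_flip [simp]: "flip \<circ> flip = id"
  by (simp add: fun_eq_iff)

lemma fibre_cases:
  assumes "x \<in> verts Xt" and "y \<in> verts Xt" and "p y = p x"
  shows "y = x \<or> y = flip x"
proof -
  obtain c where "c \<in> CT Xt X p" "c x = y" using ex1_implies_ex[OF CT_unique[OF assms]] by blast
  then show ?thesis using CT_eq by auto
qed

lemma set_mult_CT: "K <#>\<^bsub>aut_group Xt\<^esub> CT Xt X p = K \<union> (\<lambda>k. k \<circ> flip) ` K"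
  unfolding set_mult_def CT_eq by auto

lemma is_lift_comp_flip: "is_lift Xt p g k \<Longrightarrow> is_lift Xt p g (k \<circ> flip)"
  using is_lift_comp[OF _ lift_id_flip] by simp

lemma lift_base_unique:
  assumes "is_lift Xt p g k" and "is_lift Xt p g' k" and "g \<in> auts X" and "g' \<in> auts X"
  shows "g = g'"
proof (rule ext)
  fix w
  show "g w = g' w"
  proof (cases "w \<in> verts X")
    case True
    then obtain x where x: "x \<in> verts Xt" and w: "w = p x"
      using proj_image by (metis imageE)
    have "g (p x) = p (k x)" and "g' (p x) = p (k x)"
      using assms(1,2) x unfolding is_lift_def by blast+
    then show ?thesis using w by simp
  next
    case False
    then show ?thesis using assms(3,4) by (simp add: auts_outside)
  qed
qed

lemma lifts_differ_by_flip:
  assumes k: "is_lift Xt p g k" and k': "is_lift Xt p g k'" and g: "g \<in> auts X"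
  shows "k' = k \<or> k' = k \<circ> flip"
proof -
  interpret Aut: group "aut_group Xt" by (rule group_aut_group)
  have k_aut: "k \<in> auts Xt" and k'_aut: "k' \<in> auts Xt"
    using k k' by (simp_all add: is_lift_def)
  define d where "d = inv\<^bsub>aut_group Xt\<^esub> k \<circ> k'"
  have d_aut: "d \<in> auts Xt"
    using k_aut k'_aut Aut.m_closed Aut.inv_closed unfolding d_def by simp
  have k_d: "k \<circ> d = k'"
    using Aut.r_inv[of k] k_aut unfolding d_def by (simp add: comp_assoc[symmetric])
  have "p (d x) = p x" if x: "x \<in> verts Xt" for x
  proof -
    have dx: "d x \<in> verts Xt" using auts_mem_verts[OF d_aut x] .
    have "g (p (d x)) = p (k' x)" using k dx k_d unfolding is_lift_def by auto
    also have "\<dots> = g (p x)" using k' x unfolding is_lift_def by auto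
    finally show ?thesis
      using g proj_verts[OF dx] proj_verts[OF x] unfolding auts_def bij_betw_def inj_on_def by blast
  qed
  then have "d \<in> CT Xt X p" using d_aut unfolding CT_def by blast
  then show ?thesis using k_d CT_eq by auto
qed

lemma lift_commutes_flip:
  assumes k: "is_lift Xt p g k" and g: "g \<in> auts X"
  shows "flip \<circ> k = k \<circ> flip"
proof -
  have "is_lift Xt p g (flip \<circ> k)" using is_lift_comp[OF lift_id_flip k] by simp
  then have "flip \<circ> k = k \<or> flip \<circ> k = k \<circ> flip" using lifts_differ_by_flip[OF k _ g] by blast
  moreover have "flip \<circ> k \<noteq> k"
  proof
    assume "flip \<circ> k = k"
    obtain x where "x \<in> verts Xt" using verts_nonempty by blast
    then have "k x \<in> verts Xt"
      using auts_mem_verts[of k Xt x] k by (simp add: is_lift_def)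
    then have "flip (k x) \<noteq> k x"
      by (rule flip_no_fixpoint)
    with \<open>flip \<circ> k = k\<close> show False by (simp add: fun_eq_iff)
  qed
  ultimately show ?thesis by blast
qed

definition flip_if :: "bool \<Rightarrow> 'b \<Rightarrow> 'b" where
  "flip_if b = (if b then flip else id)"

lemma flip_if_aut: "flip_if b \<in> auts Xt"
  by (simp add: flip_if_def flip_aut id_in_auts)

lemma flip_if_comp: "flip_if a \<circ> flip_if b = flip_if (a \<noteq> b)"
  by (auto simp: flip_if_def fun_eq_iff)

lemma flip_if_inject: "flip_if a = flip_if b \<longleftrightarrow> a = b"
  using flip_neq_id by (auto simp: flip_if_def)

lemma is_lift_comp_flip_if: "is_lift Xt p g k \<Longrightarrow> is_lift Xt p g (k \<circ> flip_if b)"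
  using is_lift_comp_flip by (simp add: flip_if_def)

lemma lift_commutes_flip_if: "is_lift Xt p g k \<Longrightarrow> g \<in> auts X \<Longrightarrow> flip_if b \<circ> k = k \<circ> flip_if b"
  using lift_commutes_flip by (simp add: flip_if_def)

lemma flip_mem_section_iff:
  assumes S: "is_section Xt X p S" and x: "x \<in> verts Xt"
  shows "flip x \<in> S \<longleftrightarrow> x \<notin> S"
proof -
  have "\<exists>!s. s \<in> S \<and> p s = p x"
    using S proj_verts[OF x] unfolding is_section_def by simp
  then obtain s where s: "s \<in> S \<and> p s = p x" and unique: "\<forall>s'. s' \<in> S \<and> p s' = p x \<longrightarrow> s' = s"
    by (rule ex1E)
  have "s \<in> verts Xt" using s S unfolding is_section_def by blast
  then consider "s = x" | "s = flip x" using fibre_cases[OF x] s by blast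
  then show ?thesis
  proof cases
    case 1
    then have "flip x \<notin> S"
      using unique flip_no_fixpoint[OF x] flip_proj[OF x] by metis
    then show ?thesis using 1 s by blast
  next
    case 2
    then have "x \<notin> S"
      using unique flip_no_fixpoint[OF x] by metis
    then show ?thesis using 2 s by blast
  qed
qed

lemma section_fibre_unique:
  assumes "is_section Xt X p S" and "x \<in> verts Xt" and "y \<in> verts Xt" and "p y = p x"
    and "y \<in> S \<longleftrightarrow> x \<in> S"
  shows "y = x"
  using fibre_cases[OF assms(2-4)] flip_mem_section_iff[OF assms(1,2)] assms(5) by blast

end

locale split_two_covering = two_covering Xt X p
  for Xt :: "'b graph" and X :: "'a graph" and p :: "'b \<Rightarrow> 'a" +
  fixes G :: "('a \<Rightarrow> 'a) set"
  assumes finite_base: "finite (verts X)"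
    and subgroup_G: "subgroup G (aut_group X)"
    and lifts_G: "lifts Xt p G"
begin

lemma G_auts: "G \<subseteq> auts X"
  using subgroup.subset[OF subgroup_G] by simp

lemma comp_in_G: "g \<in> G \<Longrightarrow> h \<in> G \<Longrightarrow> g \<circ> h \<in> G"
  using subgroup.m_closed[OF subgroup_G] by fastforce

lemma finite_G: "finite G"
  using finite_subset[OF G_auts finite_auts[OF finite_base]] .

lemma CT_complement_unique_lift:
  assumes C: "CT_complement Xt X p G K" and g: "g \<in> G"
  shows "\<exists>!k. k \<in> K \<and> is_lift Xt p g k"
proof (rule ex_ex1I)
  have K: "subgroup K (aut_group Xt)" and K_CT: "K \<inter> CT Xt X p = {id}"
    and K_prod: "K \<union> (\<lambda>k. k \<circ> flip) ` K = lifted_group Xt p G"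
    using C unfolding CT_complement_def set_mult_CT by auto
  obtain gt where gt: "is_lift Xt p g gt" using lifts_G g unfolding lifts_def by blast
  then have "gt \<in> K \<union> (\<lambda>k. k \<circ> flip) ` K" using g K_prod unfolding lifted_group_def by blast
  then show "\<exists>k. k \<in> K \<and> is_lift Xt p g k"
    using gt is_lift_comp_flip[OF gt] by (auto simp: comp_assoc)
  fix k k' assume k: "k \<in> K \<and> is_lift Xt p g k" and k': "k' \<in> K \<and> is_lift Xt p g k'"
  interpret Aut: group "aut_group Xt" by (rule group_aut_group)
  have "k' \<noteq> k \<circ> flip"
  proof
    assume k'_eq: "k' = k \<circ> flip"
    have "inv\<^bsub>aut_group Xt\<^esub> k \<circ> k' \<in> K"
      using k k' subgroup.m_closed[OF K] subgroup.m_inv_closed[OF K] by fastforce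
    moreover have "inv\<^bsub>aut_group Xt\<^esub> k \<circ> k' = flip"
      using Aut.l_inv[of k] k subgroup.subset[OF K] k'_eq by (auto simp: comp_assoc[symmetric])
    ultimately have "flip \<in> K \<inter> CT Xt X p" using CT_eq by simp
    with K_CT flip_neq_id show False by blast
  qed
  then show "k = k'"
    using lifts_differ_by_flip[of g k k'] k k' g G_auts by blast
qed

lemma CT_complementI:
  assumes K: "subgroup K (aut_group Xt)" and KL: "K \<subseteq> lifted_group Xt p G"
    and unique: "\<And>g. g \<in> G \<Longrightarrow> \<exists>!k. k \<in> K \<and> is_lift Xt p g k"
  shows "CT_complement Xt X p G K"
proof -
  have id_K: "id \<in> K" using subgroup.one_closed[OF K] by simp
  have id_G: "id \<in> G" using subgroup.one_closed[OF subgroup_G] by simp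
  have "K \<inter> CT Xt X p \<subseteq> {id}"
  proof
    fix c assume "c \<in> K \<inter> CT Xt X p"
    then have "c \<in> K \<and> is_lift Xt p id c" by (simp add: is_lift_id_iff_CT[where X = X])
    moreover have "id \<in> K \<and> is_lift Xt p id id"
      using id_K id_in_CT by (simp add: is_lift_id_iff_CT[where X = X])
    ultimately show "c \<in> {id}" using unique[OF id_G] by blast
  qed
  moreover have "lifted_group Xt p G \<subseteq> K \<union> (\<lambda>k. k \<circ> flip) ` K"
  proof
    fix x assume "x \<in> lifted_group Xt p G"
    then obtain g where g: "g \<in> G" and x: "is_lift Xt p g x" unfolding lifted_group_def by blast
    obtain k where k: "k \<in> K" "is_lift Xt p g k" using ex1_implies_ex[OF unique[OF g]] by blast
    have "x = k \<or> x = k \<circ> flip" using lifts_differ_by_flip[OF k(2) x] g G_auts by blast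
    then show "x \<in> K \<union> (\<lambda>k. k \<circ> flip) ` K" using k(1) by blast
  qed
  moreover have "K \<union> (\<lambda>k. k \<circ> flip) ` K \<subseteq> lifted_group Xt p G"
    using KL is_lift_comp_flip unfolding lifted_group_def by blast
  ultimately show ?thesis
    using K KL id_K id_in_CT unfolding CT_complement_def set_mult_CT by blast
qed

definition complement_lift :: "('b \<Rightarrow> 'b) set \<Rightarrow> ('a \<Rightarrow> 'a) \<Rightarrow> 'b \<Rightarrow> 'b" where
  "complement_lift K g = (THE k. k \<in> K \<and> is_lift Xt p g k)"

lemma complement_lift:
  assumes "CT_complement Xt X p G K" and "g \<in> G"
  shows "complement_lift K g \<in> K" and "is_lift Xt p g (complement_lift K g)"
  using theI'[OF CT_complement_unique_lift[OF assms]] unfolding complement_lift_def by blast+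

lemma complement_lift_eqI:
  assumes "CT_complement Xt X p G K" and "g \<in> G" and "k \<in> K" and "is_lift Xt p g k"
  shows "complement_lift K g = k"
  using the1_equality[OF CT_complement_unique_lift[OF assms(1,2)]] assms(3,4)
  unfolding complement_lift_def by blast

lemma complement_lift_comp:
  assumes C: "CT_complement Xt X p G K" and g: "g \<in> G" and h: "h \<in> G"
  shows "complement_lift K (g \<circ> h) = complement_lift K g \<circ> complement_lift K h"
proof (rule complement_lift_eqI[OF C])
  show "g \<circ> h \<in> G" using comp_in_G[OF g h] .
  show "complement_lift K g \<circ> complement_lift K h \<in> K"
    using subgroup.m_closed[of K "aut_group Xt"] C[unfolded CT_complement_def]
      complement_lift(1)[OF C g] complement_lift(1)[OF C h] by fastforce
  show "is_lift Xt p (g \<circ> h) (complement_lift K g \<circ> complement_lift K h)"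
    using is_lift_comp complement_lift(2)[OF C g] complement_lift(2)[OF C h] by blast
qed

lemma complement_lift_image:
  assumes C: "CT_complement Xt X p G K"
  shows "complement_lift K ` G = K"
proof
  show "complement_lift K ` G \<subseteq> K" using complement_lift(1)[OF C] by blast
  show "K \<subseteq> complement_lift K ` G"
  proof
    fix k assume k: "k \<in> K"
    then obtain g where g: "g \<in> G" "is_lift Xt p g k"
      using C unfolding CT_complement_def lifted_group_def by blast
    then show "k \<in> complement_lift K ` G" using complement_lift_eqI[OF C g(1) k g(2)] by force
  qed
qed

definition twist :: "('b \<Rightarrow> 'b) set \<Rightarrow> ('a \<Rightarrow> 'a) set \<Rightarrow> ('a \<Rightarrow> 'a) \<Rightarrow> 'b \<Rightarrow> 'b" where
  "twist K H g = complement_lift K g \<circ> flip_if (g \<notin> H)"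

definition twisted_complement :: "('b \<Rightarrow> 'b) set \<Rightarrow> ('a \<Rightarrow> 'a) set \<Rightarrow> ('b \<Rightarrow> 'b) set" where
  "twisted_complement K H = twist K H ` G"

lemma twist_lift:
  assumes "CT_complement Xt X p G K" and "g \<in> G"
  shows "is_lift Xt p g (twist K H g)"
  unfolding twist_def using is_lift_comp_flip_if complement_lift(2)[OF assms] by blast

lemma twist_comp:
  assumes C: "CT_complement Xt X p G K" and g: "g \<in> G" and h: "h \<in> G"
  shows "twist K H g \<circ> twist K H h = complement_lift K (g \<circ> h) \<circ> flip_if ((g \<notin> H) \<noteq> (h \<notin> H))"
proof -
  have commute: "flip_if (g \<notin> H) \<circ> complement_lift K h = complement_lift K h \<circ> flip_if (g \<notin> H)"
    using lift_commutes_flip_if complement_lift(2)[OF C h] h G_auts by blast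
  have "twist K H g \<circ> twist K H h
      = complement_lift K g \<circ> (flip_if (g \<notin> H) \<circ> complement_lift K h) \<circ> flip_if (h \<notin> H)"
    by (simp add: twist_def comp_assoc)
  also have "\<dots> = (complement_lift K g \<circ> complement_lift K h) \<circ> (flip_if (g \<notin> H) \<circ> flip_if (h \<notin> H))"
    by (simp add: commute comp_assoc)
  finally show ?thesis
    by (simp add: complement_lift_comp[OF C g h] flip_if_comp)
qed

lemma twist_hom_iff_parity_kernel:
  assumes C: "CT_complement Xt X p G K" and HG: "H \<subseteq> G"
  shows "(\<forall>g\<in>G. \<forall>h\<in>G. twist K H (g \<circ> h) = twist K H g \<circ> twist K H h)
    \<longleftrightarrow> parity_kernel (aut_group X) G H"
proof -
  interpret Aut: group "aut_group Xt" by (rule group_aut_group)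
  have "twist K H (g \<circ> h) = twist K H g \<circ> twist K H h \<longleftrightarrow> (g \<circ> h \<in> H \<longleftrightarrow> (g \<in> H \<longleftrightarrow> h \<in> H))"
    if g: "g \<in> G" and h: "h \<in> G" for g h
  proof -
    have gh: "g \<circ> h \<in> G" using comp_in_G[OF g h] .
    have aut: "complement_lift K (g \<circ> h) \<in> auts Xt"
      using complement_lift(2)[OF C gh] by (simp add: is_lift_def)
    have "twist K H (g \<circ> h) = twist K H g \<circ> twist K H h
        \<longleftrightarrow> flip_if (g \<circ> h \<notin> H) = flip_if ((g \<notin> H) \<noteq> (h \<notin> H))"
      using Aut.Units_l_cancel[of "complement_lift K (g \<circ> h)" "flip_if (g \<circ> h \<notin> H)"
          "flip_if ((g \<notin> H) \<noteq> (h \<notin> H))"] aut flip_if_aut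
      unfolding twist_comp[OF C g h] by (simp add: twist_def)
    then show ?thesis by (auto simp: flip_if_inject)
  qed
  then show ?thesis using HG unfolding parity_kernel_def by simp
qed

lemma twisted_complement_CT_complement:
  assumes C: "CT_complement Xt X p G K" and H: "parity_kernel (aut_group X) G H"
  shows "CT_complement Xt X p G (twisted_complement K H)"
proof (rule CT_complementI)
  have HG: "H \<subseteq> G" using H unfolding parity_kernel_def by blast
  have hom: "twist K H (g \<circ> h) = twist K H g \<circ> twist K H h" if "g \<in> G" "h \<in> G" for g h
    using twist_hom_iff_parity_kernel[OF C HG] H that by blast
  interpret G: group "(aut_group X)\<lparr>carrier := G\<rparr>"
    using subgroup.subgroup_is_group[OF subgroup_G group_aut_group] .
  interpret twist: group_hom "(aut_group X)\<lparr>carrier := G\<rparr>" "aut_group Xt" "twist K H"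
    using twist_lift[OF C] hom
    by (intro group_hom.intro group_hom_axioms.intro G.is_group group_aut_group)
      (auto simp: hom_def is_lift_def)
  show "subgroup (twisted_complement K H) (aut_group Xt)"
    using twist.img_is_subgroup unfolding twisted_complement_def by simp
  show "twisted_complement K H \<subseteq> lifted_group Xt p G"
    using twist_lift[OF C] unfolding twisted_complement_def lifted_group_def by blast
  fix g assume g: "g \<in> G"
  show "\<exists>!k. k \<in> twisted_complement K H \<and> is_lift Xt p g k"
  proof (rule ex1I)
    show "twist K H g \<in> twisted_complement K H \<and> is_lift Xt p g (twist K H g)"
      using g twist_lift[OF C g] unfolding twisted_complement_def by blast
    fix k assume k: "k \<in> twisted_complement K H \<and> is_lift Xt p g k"
    then obtain g' where g': "g' \<in> G" "k = twist K H g'"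
      unfolding twisted_complement_def by blast
    then have "g' = g"
      using lift_base_unique[OF twist_lift[OF C g'(1)]] k g G_auts by blast
    then show "k = twist K H g" using g' by simp
  qed
qed

lemma CT_complement_is_twisted:
  assumes C0: "CT_complement Xt X p G K0" and C: "CT_complement Xt X p G K"
  shows "\<exists>H. parity_kernel (aut_group X) G H \<and> K = twisted_complement K0 H"
proof -
  define H where "H = {g \<in> G. complement_lift K g = complement_lift K0 g}"
  have HG: "H \<subseteq> G" unfolding H_def by blast
  have twist_eq: "complement_lift K g = twist K0 H g" if g: "g \<in> G" for g
  proof -
    have "complement_lift K g = complement_lift K0 g \<or> complement_lift K g = complement_lift K0 g \<circ> flip"
      using lifts_differ_by_flip complement_lift(2)[OF C0 g] complement_lift(2)[OF C g] g G_auts by blast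
    then show ?thesis using g unfolding twist_def flip_if_def H_def by auto
  qed
  have "parity_kernel (aut_group X) G H"
  proof (rule twist_hom_iff_parity_kernel[OF C0 HG, THEN iffD1], intro ballI)
    fix g h assume g: "g \<in> G" and h: "h \<in> G"
    from comp_in_G[OF g h] show "twist K0 H (g \<circ> h) = twist K0 H g \<circ> twist K0 H h"
      using complement_lift_comp[OF C g h] twist_eq g h by metis
  qed
  moreover have "K = twisted_complement K0 H"
    using complement_lift_image[OF C] twist_eq unfolding twisted_complement_def by auto
  ultimately show ?thesis by blast
qed

end

locale sectional_split_two_covering = split_two_covering Xt X p G
  for Xt :: "'b graph" and X :: "'a graph" and p :: "'b \<Rightarrow> 'a" and G +
  fixes K0 :: "('b \<Rightarrow> 'b) set" and S :: "'b set"
  assumes complement_K0: "CT_complement Xt X p G K0"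
    and section_S: "is_section Xt X p S"
    and K0_preserves_S: "\<forall>k\<in>K0. k ` S = S"
begin

lemma section_verts: "S \<subseteq> verts Xt"
  using section_S unfolding is_section_def by blast

lemma section_over: "w \<in> verts X \<Longrightarrow> \<exists>s\<in>S. p s = w"
  using section_S unfolding is_section_def by blast

lemma complement_lift_mem_section_iff:
  assumes g: "g \<in> G" and x: "x \<in> verts Xt"
  shows "complement_lift K0 g x \<in> S \<longleftrightarrow> x \<in> S"
proof -
  let ?k = "complement_lift K0 g"
  have k_S: "?k ` S = S" using K0_preserves_S complement_lift(1)[OF complement_K0 g] by blast
  have "inj_on ?k (verts Xt)"
    using complement_lift(2)[OF complement_K0 g] unfolding is_lift_def auts_def bij_betw_def by blast
  then show ?thesis using k_S x section_verts by (metis image_eqI inj_on_image_mem_iff)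
qed

lemma twist_mem_section_iff:
  assumes g: "g \<in> G" and x: "x \<in> verts Xt"
  shows "twist K0 H g x \<in> S \<longleftrightarrow> (x \<in> S \<longleftrightarrow> g \<in> H)"
proof (cases "g \<in> H")
  case True
  then show ?thesis
    using complement_lift_mem_section_iff[OF g x] by (simp add: twist_def flip_if_def)
next
  case False
  have "flip x \<in> verts Xt" using auts_mem_verts[OF flip_aut x] .
  then show ?thesis
    using False complement_lift_mem_section_iff[OF g] flip_mem_section_iff[OF section_S x]
    by (simp add: twist_def flip_if_def)
qed

lemma transitive_twisted_complementD:
  assumes trans: "vertex_transitive Xt (twisted_complement K0 H)"
  shows "H \<noteq> G" and "vertex_transitive X H"
proof -
  obtain s where s: "s \<in> S"
    using section_over verts_nonempty proj_verts by blast
  have s_verts: "s \<in> verts Xt" "flip s \<in> verts Xt"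
    using s section_verts auts_mem_verts[OF flip_aut] by auto
  then obtain g where g: "g \<in> G" "twist K0 H g s = flip s"
    using trans unfolding vertex_transitive_def twisted_complement_def by blast
  moreover have "flip s \<notin> S"
    using flip_mem_section_iff[OF section_S s_verts(1)] s by simp
  ultimately have "g \<notin> H"
    using twist_mem_section_iff[OF g(1) s_verts(1), of H] s by simp
  with g show "H \<noteq> G" by blast
  show "vertex_transitive X H"
    unfolding vertex_transitive_def
  proof (intro ballI)
    fix u v assume "u \<in> verts X" "v \<in> verts X"
    then obtain su sv where su: "su \<in> S" "p su = u" and sv: "sv \<in> S" "p sv = v"
      using section_over by blast
    then obtain g where g: "g \<in> G" "twist K0 H g su = sv"
      using trans section_verts unfolding vertex_transitive_def twisted_complement_def by blast
    have "g \<in> H"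
      using twist_mem_section_iff[OF g(1), of su] g(2) su sv section_verts by auto
    moreover have "g u = v"
      using twist_lift[OF complement_K0 g(1)] su sv g(2) section_verts unfolding is_lift_def by auto
    ultimately show "\<exists>h\<in>H. h u = v" by blast
  qed
qed

lemma transitive_twisted_complementI:
  assumes H: "parity_kernel (aut_group X) G H"
    and "H \<noteq> G" and trans: "vertex_transitive X H"
  shows "vertex_transitive Xt (twisted_complement K0 H)"
  unfolding vertex_transitive_def
proof (intro ballI)
  have HG: "H \<subseteq> G"
    and parity: "\<And>g h. g \<in> G \<Longrightarrow> h \<in> G \<Longrightarrow> g \<circ> h \<in> H \<longleftrightarrow> (g \<in> H \<longleftrightarrow> h \<in> H)"
    using H unfolding parity_kernel_def by auto
  obtain g0 where g0: "g0 \<in> G" "g0 \<notin> H" using HG \<open>H \<noteq> G\<close> by blast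
  fix u v assume u: "u \<in> verts Xt" and v: "v \<in> verts Xt"
  have pu: "p u \<in> verts X" and pv: "p v \<in> verts X" using u v proj_verts by auto
  obtain g where g: "g \<in> G" "g (p u) = p v" and g_H: "g \<in> H \<longleftrightarrow> (u \<in> S \<longleftrightarrow> v \<in> S)"
  proof (cases "u \<in> S \<longleftrightarrow> v \<in> S")
    case True
    obtain h where "h \<in> H" "h (p u) = p v" using trans pu pv unfolding vertex_transitive_def by blast
    with True HG show ?thesis by (intro that[of h]) auto
  next
    case False
    have "g0 (p u) \<in> verts X" using auts_mem_verts[of g0 X "p u"] pu g0(1) G_auts by blast
    then obtain h where h: "h \<in> H" "h (g0 (p u)) = p v"
      using trans pv unfolding vertex_transitive_def by blast
    then have "h \<circ> g0 \<in> G" "h \<circ> g0 \<notin> H" using parity[of h g0] comp_in_G[of h g0] g0 HG by auto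
    with h False show ?thesis by (intro that[of "h \<circ> g0"]) auto
  qed
  have "twist K0 H g u \<in> verts Xt" "p (twist K0 H g u) = p v"
    using twist_lift[OF complement_K0 g(1)] u g(2) auts_mem_verts[of "twist K0 H g" Xt u]
    unfolding is_lift_def by auto
  then have "twist K0 H g u = v"
    using section_fibre_unique[OF section_S v] twist_mem_section_iff[OF g(1) u] g_H by blast
  then show "\<exists>k\<in>twisted_complement K0 H. k u = v"
    using g(1) unfolding twisted_complement_def by blast
qed

end

theorem proposition3p2:
  fixes Xt :: "'b graph" and X :: "'a graph" and p :: "'b \<Rightarrow> 'a"
    and G :: "('a \<Rightarrow> 'a) set"
  assumes "simple_graph Xt" and "simple_graph X"
    and "connected_graph Xt" and "connected_graph X"
    and "two_cover Xt X p"
    and "subgroup G (aut_group X)" and "vertex_transitive X G"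
    and "lifts Xt p G"
    and "\<exists>K. CT_complement Xt X p G K \<and> sectional Xt X p K"
  shows "(\<exists>K. CT_complement Xt X p G K \<and> vertex_transitive Xt K) \<longleftrightarrow>
         (\<exists>H. subgroup H (aut_group X) \<and> H \<subseteq> G \<and> card G = 2 * card H
              \<and> vertex_transitive X H)"
proof -
  obtain K0 S where "CT_complement Xt X p G K0" "is_section Xt X p S" "\<forall>k\<in>K0. k ` S = S"
    using assms(9) unfolding sectional_def by blast
  then interpret sectional_split_two_covering Xt X p G K0 S
    unfolding sectional_split_two_covering_def sectional_split_two_covering_axioms_def
      split_two_covering_def split_two_covering_axioms_def two_covering_def
    using assms(2,3,5,6,8) by (auto simp: simple_graph_def connected_graph_def)
  interpret Aut: group "aut_group X" by (rule group_aut_group)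
  show ?thesis
  proof
    assume "\<exists>K. CT_complement Xt X p G K \<and> vertex_transitive Xt K"
    then obtain H where H: "parity_kernel (aut_group X) G H"
      and "vertex_transitive Xt (twisted_complement K0 H)"
      using CT_complement_is_twisted[OF complement_K0] by blast
    moreover have "subgroup H (aut_group X)" and "H \<subseteq> G"
      using Aut.parity_kernel_subgroup[OF subgroup_G H] H unfolding parity_kernel_def by blast+
    ultimately show "\<exists>H. subgroup H (aut_group X) \<and> H \<subseteq> G \<and> card G = 2 * card H
        \<and> vertex_transitive X H"
      using transitive_twisted_complementD Aut.index_two_if_parity_kernel[OF subgroup_G _ finite_G]
      by blast
  next
    assume "\<exists>H. subgroup H (aut_group X) \<and> H \<subseteq> G \<and> card G = 2 * card H \<and> vertex_transitive X H"
    then obtain H where "subgroup H (aut_group X)" "H \<subseteq> G" "card G = 2 * card H"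
      and "vertex_transitive X H" by blast
    then show "\<exists>K. CT_complement Xt X p G K \<and> vertex_transitive Xt K"
      using Aut.parity_kernel_if_index_two[OF subgroup_G _ _ finite_G]
        twisted_complement_CT_complement[OF complement_K0] transitive_twisted_complementI
      by blast
  qed
qed

end
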